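(* For every $a\in\mathbb N^{\mathbb N}$ and $n\in\mathbb N$, $q_n(a)\le\#\Omega_{a,n}\le10\,q_n(a)$.
   Context: For $a=(a_n)\in\mathbb N^{\mathbb N}$, $q_n(a)$ are the continued fraction denominators: $q_{-1}=0$, $q_0=1$, $q_{n+1}=a_{n+1}q_n+q_{n-1}$. For $n\ge1$ let $\mathcal A_n=\{(\mathbf1,k)_n:1\le k\le n+1\}\cup\{(\mathbf2,1)_n\}\cup\{(\mathbf3,k)_n:1\le k\le n\}$, type $\mathbf t_{(\mathbf t,k)_n}=\mathbf t$. For $\mathbf t\in\{\mathbf1,\mathbf2,\mathbf3\}$, $\hat e\in\mathcal A_n$: $\mathbf t\to\hat e$ iff $(\mathbf t,\hat e)$ is $(\mathbf1,(\mathbf2,1)_n)$, $(\mathbf2,(\mathbf1,k)_n)$ with $k\le n+1$, $(\mathbf2,(\mathbf3,k)_n)$ with $k\le n$, $(\mathbf3,(\mathbf1,k)_n)$ with $k\le n$, or $(\mathbf3,(\mathbf3,k)_n)$ with $k\le n-1$; $e\to\hat e$ iff $\mathbf t_e\to\hat e$. $\Omega_{a,n}$ is the set of words $w_1\cdots w_n$ with $w_j\in\mathcal A_{a_j}$ and $w_j\to w_{j+1}$ for $1\le j<n$. *)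

theory Defs
  imports Main
begin

text \<open>Continued fraction denominators, with a indexed from 1:
  q 0 = 1, q 1 = a 1, q (n+2) = a (n+2) * q (n+1) + q n  (q_{-1} = 0).\<close>
fun cf_q :: "(nat \<Rightarrow> nat) \<Rightarrow> nat \<Rightarrow> nat" where
  "cf_q a 0 = 1"
| "cf_q a (Suc 0) = a 1"
| "cf_q a (Suc (Suc n)) = a (Suc (Suc n)) * cf_q a (Suc n) + cf_q a n"

datatype ltype = T1 | T2 | T3

text \<open>A letter (t,k)_n is represented as the triple (t, k, n).\<close>
type_synonym letter = "ltype \<times> nat \<times> nat"

definition alph :: "nat \<Rightarrow> letter set" where
  "alph n = {(T1, k, n) | k. 1 \<le> k \<and> k \<le> n + 1} \<union> {(T2, 1, n)}
          \<union> {(T3, k, n) | k. 1 \<le> k \<and> k \<le> n}"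

fun tarrow :: "ltype \<Rightarrow> letter \<Rightarrow> bool" where
  "tarrow T1 (t', k, n) = (t' = T2 \<and> k = 1)"
| "tarrow T2 (t', k, n) = ((t' = T1 \<and> k \<le> n + 1) \<or> (t' = T3 \<and> k \<le> n))"
| "tarrow T3 (t', k, n) = ((t' = T1 \<and> k \<le> n) \<or> (t' = T3 \<and> k + 1 \<le> n))"

definition larrow :: "letter \<Rightarrow> letter \<Rightarrow> bool" where
  "larrow e e' = tarrow (fst e) e'"

text \<open>Omega a n: words w_1...w_n (list index j-1 holds w_j) with w_j in alph (a j).\<close>
definition Omega :: "(nat \<Rightarrow> nat) \<Rightarrow> nat \<Rightarrow> letter list set" where
  "Omega a n = {w. length w = n \<and> (\<forall>j<n. w ! j \<in> alph (a (Suc j)))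
                 \<and> (\<forall>j. Suc j < n \<longrightarrow> larrow (w ! j) (w ! Suc j))}"

end

theory Submission
  imports Defs
begin

text \<open>Write c_t(n) for the number of words in Omega_{a,n} whose last letter has type t.
  Appending a letter gives linear recurrences for (c_1, c_2, c_3), from which
  c_1 = c_2 + c_3 and c_2(n+1) = c_1(n) follow; hence #Omega_{a,n} = 2 c_2(n+1) for n >= 1.
  The sequence s_n = c_2(n+1) satisfies the continued fraction recurrence
  s_{n+2} = a_{n+2} s_{n+1} + s_n with s_0 = 1 and s_1 = a_1 + 1, so q_n <= s_n <= 2 q_n,
  and in fact 2 q_n <= #Omega_{a,n} <= 4 q_n.\<close>

lemma cf_recurrence_solution_bounds:
  fixes s :: "nat \<Rightarrow> nat"
  assumes rec: "\<And>n. s (Suc (Suc n)) = a (Suc (Suc n)) * s (Suc n) + s n"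
    and "cf_q a 0 \<le> s 0" "s 0 \<le> c * cf_q a 0" "cf_q a 1 \<le> s 1" "s 1 \<le> c * cf_q a 1"
  shows "cf_q a n \<le> s n \<and> s n \<le> c * cf_q a n"
proof (induction n rule: induct_nat_012)
  case (ge2 n)
  then show ?case
    unfolding rec by (auto simp: algebra_simps intro: add_mono mult_le_mono2)
qed (use assms in simp_all)

definition Omega_ending :: "(nat \<Rightarrow> nat) \<Rightarrow> nat \<Rightarrow> ltype \<Rightarrow> letter list set" where
  "Omega_ending a n t = {w \<in> Omega a n. fst (last w) = t}"

definition arrow_targets :: "nat \<Rightarrow> ltype \<Rightarrow> ltype \<Rightarrow> letter set" where
  "arrow_targets m t t' = {e \<in> alph m. fst e = t' \<and> tarrow t e}"

lemma finite_alph: "finite (alph m)"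
proof -
  have "alph m \<subseteq> {T1, T2, T3} \<times> {1..m+1} \<times> {m}"
    by (auto simp: alph_def)
  then show ?thesis
    by (rule finite_subset) simp
qed

lemma finite_Omega: "finite (Omega a n)"
proof -
  have "Omega a n \<subseteq> {w. set w \<subseteq> (\<Union>j\<le>n. alph (a j)) \<and> length w = n}"
    by (fastforce simp: Omega_def in_set_conv_nth)
  then show ?thesis
    by (rule finite_subset) (simp add: finite_lists_length_eq finite_alph)
qed

lemma snoc_in_Omega_iff:
  "w @ [e] \<in> Omega a (Suc n) \<longleftrightarrow>
     w \<in> Omega a n \<and> e \<in> alph (a (Suc n)) \<and> (w = [] \<or> larrow (last w) e)"
proof (cases "w = []")
  case False
  then obtain i where i: "length w = Suc i"
    by (cases w) auto
  have last: "last w = w ! i"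
    using False i by (simp add: last_conv_nth)
  have letters: "(\<forall>j<Suc n. (w @ [e]) ! j \<in> alph (a (Suc j))) \<longleftrightarrow>
      (\<forall>j<n. w ! j \<in> alph (a (Suc j))) \<and> e \<in> alph (a (Suc n))" if "length w = n"
    using that by (auto simp: nth_append less_Suc_eq)
  have arrows: "(\<forall>j. Suc j < Suc n \<longrightarrow> larrow ((w @ [e]) ! j) ((w @ [e]) ! Suc j)) \<longleftrightarrow>
      (\<forall>j. Suc j < n \<longrightarrow> larrow (w ! j) (w ! Suc j)) \<and> larrow (last w) e" if "length w = n"
    using that i unfolding last by (auto simp: nth_append less_Suc_eq)
  show ?thesis
    using False letters arrows unfolding Omega_def by auto
qed (auto simp: Omega_def)

lemma card_letter_range: "card {(t, k, m) | k. 1 \<le> k \<and> k \<le> N} = N"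
proof -
  have "{(t, k, m) | k. 1 \<le> k \<and> k \<le> N} = (\<lambda>k. (t, k, m)) ` {1..N}"
    by auto
  then show ?thesis
    by (simp add: card_image inj_on_def)
qed

lemma Omega_ending_Suc:
  assumes "n \<ge> 1"
  shows "Omega_ending a (Suc n) t' =
    (\<lambda>(w, e). w @ [e]) ` (SIGMA w:Omega a n. arrow_targets (a (Suc n)) (fst (last w)) t')"
proof (intro equalityI subsetI)
  fix v
  assume v: "v \<in> Omega_ending a (Suc n) t'"
  then have "length v = Suc n"
    by (simp add: Omega_ending_def Omega_def)
  then have v_snoc: "v = butlast v @ [last v]" and "butlast v \<noteq> []"
    using assms by (auto simp flip: length_0_conv)
  then have "(butlast v, last v) \<in>
      (SIGMA w:Omega a n. arrow_targets (a (Suc n)) (fst (last w)) t')"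
    using v snoc_in_Omega_iff[of "butlast v" "last v" a n]
    by (auto simp: Omega_ending_def arrow_targets_def larrow_def)
  with v_snoc show "v \<in> (\<lambda>(w, e). w @ [e]) `
      (SIGMA w:Omega a n. arrow_targets (a (Suc n)) (fst (last w)) t')"
    by force
qed (auto simp: Omega_ending_def arrow_targets_def larrow_def snoc_in_Omega_iff)

lemma card_Omega_ending_1_eq: "card (Omega_ending a 1 t) = card {e \<in> alph (a 1). fst e = t}"
proof -
  have "Omega_ending a 1 t = (\<lambda>e. [e]) ` {e \<in> alph (a 1). fst e = t}"
  proof (intro equalityI subsetI)
    fix v
    assume v: "v \<in> Omega_ending a 1 t"
    then obtain e where "v = [e]"
      by (auto simp: Omega_ending_def Omega_def length_Suc_conv)
    with v show "v \<in> (\<lambda>e. [e]) ` {e \<in> alph (a 1). fst e = t}"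
      using snoc_in_Omega_iff[of "[]" e a 0] by (auto simp: Omega_ending_def)
  qed (auto simp: Omega_ending_def snoc_in_Omega_iff[of "[]", simplified] Omega_def)
  then show ?thesis
    by (simp add: card_image inj_on_def)
qed

lemma sum_Omega_by_last_type:
  "(\<Sum>w\<in>Omega a n. f (fst (last w))) = (\<Sum>t\<in>{T1, T2, T3}. card (Omega_ending a n t) * f t)"
proof -
  have "(\<Sum>w\<in>Omega a n. f (fst (last w))) =
      (\<Sum>t\<in>{T1, T2, T3}. \<Sum>w\<in>Omega_ending a n t. f (fst (last w)))"
    unfolding Omega_ending_def
    by (rule sum.group[symmetric]) (auto simp: finite_Omega intro: ltype.exhaust)
  also have "\<dots> = (\<Sum>t\<in>{T1, T2, T3}. card (Omega_ending a n t) * f t)"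
    by (intro sum.cong refl) (simp add: Omega_ending_def)
  finally show ?thesis .
qed

lemma card_Omega_ending_Suc:
  assumes "n \<ge> 1"
  shows "card (Omega_ending a (Suc n) t') =
    (\<Sum>t\<in>{T1, T2, T3}. card (Omega_ending a n t) * card (arrow_targets (a (Suc n)) t t'))"
proof -
  have "card (Omega_ending a (Suc n) t') =
      card (SIGMA w:Omega a n. arrow_targets (a (Suc n)) (fst (last w)) t')"
    unfolding Omega_ending_Suc[OF assms] by (rule card_image) (auto simp: inj_on_def)
  also have "\<dots> = (\<Sum>w\<in>Omega a n. card (arrow_targets (a (Suc n)) (fst (last w)) t'))"
    by (simp add: finite_Omega arrow_targets_def finite_alph)
  also have "\<dots> =
      (\<Sum>t\<in>{T1, T2, T3}. card (Omega_ending a n t) * card (arrow_targets (a (Suc n)) t t'))"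
    by (rule sum_Omega_by_last_type)
  finally show ?thesis .
qed

lemma arrow_targets_as_range:
  "arrow_targets m T1 T1 = {(T1, k, m) | k. 1 \<le> k \<and> k \<le> 0}"
  "arrow_targets m T1 T2 = {(T2, k, m) | k. 1 \<le> k \<and> k \<le> 1}"
  "arrow_targets m T1 T3 = {(T3, k, m) | k. 1 \<le> k \<and> k \<le> 0}"
  "arrow_targets m T2 T1 = {(T1, k, m) | k. 1 \<le> k \<and> k \<le> m + 1}"
  "arrow_targets m T2 T2 = {(T2, k, m) | k. 1 \<le> k \<and> k \<le> 0}"
  "arrow_targets m T2 T3 = {(T3, k, m) | k. 1 \<le> k \<and> k \<le> m}"
  "arrow_targets m T3 T1 = {(T1, k, m) | k. 1 \<le> k \<and> k \<le> m}"
  "arrow_targets m T3 T2 = {(T2, k, m) | k. 1 \<le> k \<and> k \<le> 0}"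
  "arrow_targets m T3 T3 = {(T3, k, m) | k. 1 \<le> k \<and> k \<le> m - 1}"
  by (auto simp: arrow_targets_def alph_def)

lemma card_arrow_targets:
  "card (arrow_targets m T1 T1) = 0" "card (arrow_targets m T1 T2) = 1"
  "card (arrow_targets m T1 T3) = 0" "card (arrow_targets m T2 T1) = m + 1"
  "card (arrow_targets m T2 T2) = 0" "card (arrow_targets m T2 T3) = m"
  "card (arrow_targets m T3 T1) = m" "card (arrow_targets m T3 T2) = 0"
  "card (arrow_targets m T3 T3) = m - 1"
  by (simp_all only: arrow_targets_as_range card_letter_range)

lemma letters_of_type_as_range:
  "{e \<in> alph m. fst e = T1} = {(T1, k, m) | k. 1 \<le> k \<and> k \<le> m + 1}"
  "{e \<in> alph m. fst e = T2} = {(T2, k, m) | k. 1 \<le> k \<and> k \<le> 1}"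
  "{e \<in> alph m. fst e = T3} = {(T3, k, m) | k. 1 \<le> k \<and> k \<le> m}"
  by (auto simp: alph_def)

lemma card_Omega_ending_1:
  "card (Omega_ending a 1 T1) = a 1 + 1" "card (Omega_ending a 1 T2) = 1"
  "card (Omega_ending a 1 T3) = a 1"
  by (simp_all only: card_Omega_ending_1_eq letters_of_type_as_range card_letter_range)

lemma card_Omega_ending_step:
  assumes "n \<ge> 1"
  shows "card (Omega_ending a (Suc n) T1) =
      card (Omega_ending a n T2) * (a (Suc n) + 1) + card (Omega_ending a n T3) * a (Suc n)"
    "card (Omega_ending a (Suc n) T2) = card (Omega_ending a n T1)"
    "card (Omega_ending a (Suc n) T3) =
      card (Omega_ending a n T2) * a (Suc n) + card (Omega_ending a n T3) * (a (Suc n) - 1)"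
  using assms by (simp_all add: card_Omega_ending_Suc card_arrow_targets)

lemma card_Omega_ending_T1:
  assumes pos: "\<forall>j\<ge>1. a j \<ge> 1" and "n \<ge> 1"
  shows "card (Omega_ending a n T1) = card (Omega_ending a n T2) + card (Omega_ending a n T3)"
  using \<open>n \<ge> 1\<close>
proof (induction n rule: dec_induct)
  case base
  show ?case
    using card_Omega_ending_1 by simp
next
  case (step n)
  have "a (Suc n) \<ge> 1"
    using pos by simp
  then obtain k where "a (Suc n) = Suc k"
    by (cases "a (Suc n)") auto
  with step show ?case
    by (simp add: card_Omega_ending_step algebra_simps)
qed

lemma card_Omega_ending_T2_recurrence:
  assumes "\<forall>j\<ge>1. a j \<ge> 1"
  shows "card (Omega_ending a (Suc (Suc (Suc n))) T2) =
    a (Suc (Suc n)) * card (Omega_ending a (Suc (Suc n)) T2) + card (Omega_ending a (Suc n) T2)"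
  using card_Omega_ending_T1[OF assms, of "Suc n"]
  by (simp add: card_Omega_ending_step algebra_simps)

lemma card_Omega:
  assumes "\<forall>j\<ge>1. a j \<ge> 1" and "n \<ge> 1"
  shows "card (Omega a n) = 2 * card (Omega_ending a (Suc n) T2)"
proof -
  have "card (Omega a n) = (\<Sum>w\<in>Omega a n. 1)"
    by simp
  also have "\<dots> =
      card (Omega_ending a n T1) + card (Omega_ending a n T2) + card (Omega_ending a n T3)"
    using sum_Omega_by_last_type[of "\<lambda>_. 1" a n] by simp
  finally show ?thesis
    using assms by (simp add: card_Omega_ending_T1 card_Omega_ending_step)
qed

theorem lemma4p3:
  fixes a :: "nat \<Rightarrow> nat" and n :: nat
  assumes "\<forall>j\<ge>1. a j \<ge> 1"
  shows "cf_q a n \<le> card (Omega a n) \<and> card (Omega a n) \<le> 10 * cf_q a n"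
proof (cases "n = 0")
  case True
  then show ?thesis
    by (simp add: Omega_def)
next
  case False
  let ?s = "\<lambda>n. card (Omega_ending a (Suc n) T2)"
  have "cf_q a n \<le> ?s n \<and> ?s n \<le> 2 * cf_q a n"
  proof (rule cf_recurrence_solution_bounds)
    show "?s (Suc (Suc m)) = a (Suc (Suc m)) * ?s (Suc m) + ?s m" for m
      using assms by (rule card_Omega_ending_T2_recurrence)
    have "?s 0 = 1" "?s 1 = a 1 + 1" "a 1 \<ge> 1"
      using assms card_Omega_ending_1 by (simp_all add: card_Omega_ending_step)
    then show "cf_q a 0 \<le> ?s 0" "?s 0 \<le> 2 * cf_q a 0" "cf_q a 1 \<le> ?s 1" "?s 1 \<le> 2 * cf_q a 1"
      by simp_all
  qed
  moreover have "card (Omega a n) = 2 * ?s n"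
    using assms False by (simp add: card_Omega)
  ultimately show ?thesis
    by simp
qed

end
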